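(* For any rooted binary phylogenetic tree $T$ under the $N_r$ model, $RA_{\rm MP}(T)\ge\frac1r$. Moreover, if $p_e<\frac{r-1}{r}$ for every edge $e$, then $RA_{\rm MP}(T)>\frac1r$.
   Context: A rooted binary phylogenetic tree is a finite tree with a distinguished root vertex $\rho$ of out-degree 2, all edges directed away from $\rho$, and every other vertex of in-degree 1 and out-degree 0 or 2; out-degree-0 vertices are leaves, forming the leaf set $X$. Under the Neyman $r$-state model $N_r$ ($r\ge2$) on a state set $\mathcal A$ of size $r$, each edge $e$ carries a substitution probability $p_e\in[0,\frac{r-1}{r}]$; given $F(\rho)$, states propagate independently along edges: for an edge $(u,v)$, $F(v)=F(u)$ with probability $1-p_e$, and otherwise $F(v)$ is uniform among the $r-1$ other states; $f=F|_X$. Fitch sets: each leaf $x$ gets $\{f(x)\}$; a vertex with children $v_1,v_2$ gets $\mathrm{FS}(v_1)\cap\mathrm{FS}(v_2)$ if nonempty, else the union. $\mathrm{MP}(f,T)$ is a uniformly random element of the Fitch set of $\rho$, and $RA_{\rm MP}(T)=\mathbb P(\mathrm{MP}(f,T)=\alpha\mid F(\rho)=\alpha)$. *)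

theory Defs
  imports "HOL-Probability.Probability"
begin

text \<open>A Node carries the substitution probability of the edge to its left child,
  the left subtree, the probability of the edge to its right child, and the
  right subtree. Leaves are ordered left to right; a character on the leaf set
  is a list of states of length nleaves T. The state set is {0..<r}.\<close>

datatype ptree = Leaf | Node real ptree real ptree

fun nleaves :: "ptree \<Rightarrow> nat" where
  "nleaves Leaf = 1"
| "nleaves (Node p l q rt) = nleaves l + nleaves rt"

fun edge_probs :: "ptree \<Rightarrow> real set" where
  "edge_probs Leaf = {}"
| "edge_probs (Node p l q rt) = {p, q} \<union> edge_probs l \<union> edge_probs rt"

definition nr_step :: "nat \<Rightarrow> real \<Rightarrow> nat \<Rightarrow> nat pmf" where
  "nr_step r p a = bind_pmf (bernoulli_pmf p)
     (\<lambda>change. if change then pmf_of_set ({..<r} - {a}) else return_pmf a)"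

fun leaf_char :: "nat \<Rightarrow> ptree \<Rightarrow> nat \<Rightarrow> nat list pmf" where
  "leaf_char r Leaf a = return_pmf [a]"
| "leaf_char r (Node p l q rt) a =
     bind_pmf (nr_step r p a) (\<lambda>b.
     bind_pmf (nr_step r q a) (\<lambda>c.
     bind_pmf (leaf_char r l b) (\<lambda>xs.
     bind_pmf (leaf_char r rt c) (\<lambda>ys. return_pmf (xs @ ys)))))"

fun fitch :: "ptree \<Rightarrow> nat list \<Rightarrow> nat set" where
  "fitch Leaf xs = {hd xs}"
| "fitch (Node p l q rt) xs =
     (let A = fitch l (take (nleaves l) xs); B = fitch rt (drop (nleaves l) xs)
      in if A \<inter> B \<noteq> {} then A \<inter> B else A \<union> B)"

text \<open>MP(f,T): uniformly random element of the root Fitch set;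
  RA_MP(T) = P(MP(f,T) = alpha | F(rho) = alpha).\<close>
definition RA_MP :: "nat \<Rightarrow> ptree \<Rightarrow> nat \<Rightarrow> real" where
  "RA_MP r T \<alpha> = pmf (bind_pmf (leaf_char r T \<alpha>) (\<lambda>xs. pmf_of_set (fitch T xs))) \<alpha>"

end

theory Submission
  imports Defs "HOL-Combinatorics.Permutations"
begin

text \<open>Let \<open>P\<^sub>a\<close> be the distribution of the Fitch set of the root when the root has
  state \<open>a\<close>. For states \<open>\<alpha> \<noteq> \<beta>\<close>, \<open>P\<^sub>\<alpha>\<close> gives at least as much mass as \<open>P\<^sub>\<beta>\<close> to every
  set that does not contain \<open>\<beta>\<close> without \<open>\<alpha>\<close>. Along an edge the
  Neyman step multiplies \<open>P\<^sub>\<alpha> - P\<^sub>\<beta>\<close> by \<open>1 - r p / (r - 1) \<ge> 0\<close>. At an inner vertex a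
  Fitch set containing \<open>\<alpha>\<close> but not \<open>\<beta>\<close> only arises from child sets of the favoured kind,
  while sets containing both or neither of \<open>\<alpha>, \<beta>\<close> have equal mass by the symmetry of the
  model under the transposition of \<open>\<alpha>\<close> and \<open>\<beta>\<close>.

  Consequently \<open>P(MP = \<alpha> | root \<beta>) \<le> P(MP = \<alpha> | root \<alpha>)\<close>, and by the same symmetry the
  left side equals \<open>P(MP = \<beta> | root \<alpha>)\<close>. So \<open>RA_MP\<close> is the largest of the \<open>r\<close>
  probabilities \<open>P(MP = x | root \<alpha>)\<close>, which sum to 1. If all \<open>p\<^sub>e < (r - 1) / r\<close>, the
  inequality is strict for the singleton \<open>{\<alpha>}\<close>, hence for \<open>RA_MP\<close>.\<close>

lemma Neyman_targets_nonempty: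
  assumes "2 \<le> r"
  shows "{..<r::nat} - {a} \<noteq> {}"
proof -
  have "0 \<in> {..<r} - {a} \<or> 1 \<in> {..<r} - {a}"
    using assms by auto
  then show ?thesis
    by blast
qed

lemma set_pmf_nr_step:
  assumes "2 \<le> r" "a < r"
  shows "set_pmf (nr_step r p a) \<subseteq> {..<r}"
proof
  fix b assume "b \<in> set_pmf (nr_step r p a)"
  then obtain change where "b \<in> set_pmf (if change then pmf_of_set ({..<r} - {a}) else return_pmf a)"
    by (auto simp: nr_step_def)
  moreover have "set_pmf (pmf_of_set ({..<r} - {a})) = {..<r} - {a}"
    using Neyman_targets_nonempty[OF assms(1)] by simp
  ultimately show "b \<in> {..<r}"
    using assms(2) by (cases change) auto
qed

lemma pmf_nr_step:
  assumes "2 \<le> r" "a < r" "b < r" "0 \<le> p" "p \<le> 1"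
  shows "pmf (nr_step r p a) b = (if b = a then 1 - p else p / (real r - 1))"
proof -
  have "card ({..<r} - {a}) = r - 1" and "real (r - 1) = real r - 1"
    using assms by auto
  then show ?thesis
    using assms Neyman_targets_nonempty[OF assms(1), of a]
    by (simp add: nr_step_def pmf_bind indicator_def)
qed

lemma sum_nr_step:
  fixes f :: "nat \<Rightarrow> real"
  assumes "2 \<le> r" "a < r" "0 \<le> p" "p \<le> 1"
  shows "(\<Sum>c<r. pmf (nr_step r p a) c * f c)
    = (1 - p) * f a + p / (real r - 1) * ((\<Sum>c<r. f c) - f a)"
proof -
  have "(\<Sum>c<r. pmf (nr_step r p a) c * f c)
      = (1 - p) * f a + (\<Sum>c\<in>{..<r} - {a}. p / (real r - 1) * f c)"
    using assms by (subst sum.remove[of _ a]) (auto simp: pmf_nr_step intro!: sum.cong)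
  also have "\<dots> = (1 - p) * f a + p / (real r - 1) * ((\<Sum>c<r. f c) - f a)"
    using assms
    by (simp add: sum_diff1 sum_divide_distrib[symmetric] sum_distrib_left[symmetric]
        right_diff_distrib diff_divide_distrib)
  finally show ?thesis .
qed

text \<open>\<open>1 - p r / (r - 1)\<close> is the probability of keeping a state minus the probability of
  moving to one given other state.\<close>

lemma sum_nr_step_diff:
  fixes f :: "nat \<Rightarrow> real"
  assumes "2 \<le> r" "a < r" "b < r" "0 \<le> p" "p \<le> 1"
  shows "(\<Sum>c<r. pmf (nr_step r p a) c * f c) - (\<Sum>c<r. pmf (nr_step r p b) c * f c)
    = (1 - p * real r / (real r - 1)) * (f a - f b)"
proof -
  define k where "k = p / (real r - 1)"
  have "p * real r / (real r - 1) = p + k"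
    using assms(1) by (simp add: k_def field_simps)
  then show ?thesis
    unfolding sum_nr_step[OF assms(1,2,4,5)] sum_nr_step[OF assms(1,3,4,5)] k_def[symmetric]
    by (simp add: algebra_simps)
qed

lemma nr_step_permutes:
  assumes "\<pi> permutes {..<r}" "2 \<le> r"
  shows "nr_step r p (\<pi> a) = map_pmf \<pi> (nr_step r p a)"
proof -
  have targets: "\<pi> ` ({..<r} - {a}) = {..<r} - {\<pi> a}"
    using permutes_inj[OF assms(1)] by (simp add: image_set_diff permutes_image[OF assms(1)])
  have "map_pmf \<pi> (pmf_of_set ({..<r} - {a})) = pmf_of_set ({..<r} - {\<pi> a})"
    using Neyman_targets_nonempty[OF assms(2)] permutes_inj[OF assms(1)]
    by (subst map_pmf_of_set_inj) (auto simp: targets intro: inj_on_subset)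
  then show ?thesis
    by (simp add: nr_step_def map_bind_pmf if_distrib cong: if_cong)
qed

lemma leaf_char_permutes:
  assumes "\<pi> permutes {..<r}" "2 \<le> r"
  shows "leaf_char r T (\<pi> a) = map_pmf (map \<pi>) (leaf_char r T a)"
  by (induction T arbitrary: a)
     (simp_all add: nr_step_permutes[OF assms] bind_map_pmf map_bind_pmf)

lemma length_leaf_char: "xs \<in> set_pmf (leaf_char r T a) \<Longrightarrow> length xs = nleaves T"
  by (induction T arbitrary: a xs) auto

lemma set_leaf_char:
  "2 \<le> r \<Longrightarrow> a < r \<Longrightarrow> xs \<in> set_pmf (leaf_char r T a) \<Longrightarrow> set xs \<subseteq> {..<r}"
proof (induction T arbitrary: a xs)
  case (Node p l q rt)
  then show ?case
    using set_pmf_nr_step[OF Node.prems(1,2)] by (fastforce simp: set_bind_pmf)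
qed simp

lemma fitch_nonempty: "fitch T xs \<noteq> {}"
  by (induction T arbitrary: xs) (auto simp: Let_def)

lemma fitch_subset: "length xs = nleaves T \<Longrightarrow> fitch T xs \<subseteq> set xs"
proof (induction T arbitrary: xs)
  case Leaf
  then show ?case by (cases xs) auto
next
  case (Node p l q rt)
  have "fitch l (take (nleaves l) xs) \<subseteq> set (take (nleaves l) xs)"
    and "fitch rt (drop (nleaves l) xs) \<subseteq> set (drop (nleaves l) xs)"
    using Node by simp_all
  then have "fitch l (take (nleaves l) xs) \<subseteq> set xs" "fitch rt (drop (nleaves l) xs) \<subseteq> set xs"
    by (meson order.trans set_take_subset set_drop_subset)+
  then show ?case by (auto simp: Let_def)
qed

lemma fitch_map:
  assumes "inj f" "length xs = nleaves T"
  shows "fitch T (map f xs) = f ` fitch T xs"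
  using assms(2)
proof (induction T arbitrary: xs)
  case Leaf
  then show ?case by (cases xs) auto
next
  case (Node p l q rt)
  then show ?case
    by (simp add: Let_def take_map drop_map image_Int[OF assms(1), symmetric] image_Un)
qed

definition fitch_join :: "'a set \<Rightarrow> 'a set \<Rightarrow> 'a set" where
  "fitch_join A B = (if A \<inter> B \<noteq> {} then A \<inter> B else A \<union> B)"

definition fitch_join_pmf :: "'a set pmf \<Rightarrow> 'a set pmf \<Rightarrow> 'a set pmf" where
  "fitch_join_pmf \<mu> \<nu> = map_pmf (\<lambda>(A, B). fitch_join A B) (pair_pmf \<mu> \<nu>)"

definition fitch_dist :: "nat \<Rightarrow> ptree \<Rightarrow> nat \<Rightarrow> nat set pmf" where
  "fitch_dist r T a = map_pmf (fitch T) (leaf_char r T a)"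

definition edge_fitch_dist :: "nat \<Rightarrow> real \<Rightarrow> ptree \<Rightarrow> nat \<Rightarrow> nat set pmf" where
  "edge_fitch_dist r p T a = bind_pmf (nr_step r p a) (fitch_dist r T)"

lemma fitch_dist_Leaf: "fitch_dist r Leaf a = return_pmf {a}"
  by (simp add: fitch_dist_def)

lemma fitch_dist_Node:
  "fitch_dist r (Node p l q rt) a =
     fitch_join_pmf (edge_fitch_dist r p l a) (edge_fitch_dist r q rt a)"
proof -
  have "fitch_dist r (Node p l q rt) a =
      bind_pmf (nr_step r p a) (\<lambda>b. bind_pmf (nr_step r q a) (\<lambda>c.
      bind_pmf (leaf_char r l b) (\<lambda>xs. bind_pmf (leaf_char r rt c) (\<lambda>ys.
      return_pmf (fitch_join (fitch l xs) (fitch rt ys))))))"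
    by (auto simp: fitch_dist_def map_bind_pmf fitch_join_def Let_def length_leaf_char
        intro!: bind_pmf_cong)
  also have "\<dots> = bind_pmf (nr_step r p a) (\<lambda>b. bind_pmf (leaf_char r l b) (\<lambda>xs.
      bind_pmf (nr_step r q a) (\<lambda>c. bind_pmf (leaf_char r rt c) (\<lambda>ys.
      return_pmf (fitch_join (fitch l xs) (fitch rt ys))))))"
    by (rule bind_pmf_cong[OF refl]) (rule bind_commute_pmf)
  also have "\<dots> = fitch_join_pmf (edge_fitch_dist r p l a) (edge_fitch_dist r q rt a)"
    by (simp add: edge_fitch_dist_def fitch_dist_def fitch_join_pmf_def pair_pmf_def map_pmf_def
        bind_assoc_pmf bind_return_pmf)
  finally show ?thesis .
qed

lemma finite_nonempty_set_fitch_dist: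
  assumes "S \<in> set_pmf (fitch_dist r T a)"
  shows "finite S" "S \<noteq> {}"
proof -
  obtain xs where xs: "xs \<in> set_pmf (leaf_char r T a)" and S: "S = fitch T xs"
    using assms by (auto simp: fitch_dist_def)
  show "finite S"
    using fitch_subset[OF length_leaf_char[OF xs]] S finite_subset by blast
  show "S \<noteq> {}"
    using fitch_nonempty S by blast
qed

lemma set_fitch_dist:
  assumes "2 \<le> r" "a < r"
  shows "set_pmf (fitch_dist r T a) \<subseteq> Pow {..<r} - {{}}"
proof
  fix S assume S: "S \<in> set_pmf (fitch_dist r T a)"
  then obtain xs where xs: "xs \<in> set_pmf (leaf_char r T a)" and "S = fitch T xs"
    by (auto simp: fitch_dist_def)
  then have "S \<subseteq> set xs"
    using fitch_subset[OF length_leaf_char[OF xs]] by simp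
  then show "S \<in> Pow {..<r} - {{}}"
    using set_leaf_char[OF assms xs] finite_nonempty_set_fitch_dist[OF S] by auto
qed

lemma set_edge_fitch_dist:
  assumes "2 \<le> r" "a < r"
  shows "set_pmf (edge_fitch_dist r p T a) \<subseteq> Pow {..<r} - {{}}"
proof
  fix S assume "S \<in> set_pmf (edge_fitch_dist r p T a)"
  then obtain b where b: "b \<in> set_pmf (nr_step r p a)" and "S \<in> set_pmf (fitch_dist r T b)"
    by (auto simp: edge_fitch_dist_def)
  moreover have "b < r"
    using set_pmf_nr_step[OF assms] b by blast
  ultimately show "S \<in> Pow {..<r} - {{}}"
    using set_fitch_dist[OF assms(1)] by blast
qed

lemma pmf_fitch_join_pmf:
  assumes "finite U" "set_pmf \<mu> \<subseteq> U" "set_pmf \<nu> \<subseteq> U"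
  shows "pmf (fitch_join_pmf \<mu> \<nu>) S
    = (\<Sum>(A, B)\<in>U \<times> U. of_bool (fitch_join A B = S) * (pmf \<mu> A * pmf \<nu> B))"
  unfolding fitch_join_pmf_def map_pmf_def pmf_bind pmf_return
  using assms
  by (subst integral_measure_pmf_real[of "U \<times> U"])
     (auto simp: pmf_pair split_beta' mult.commute simp del: of_bool_eq_iff intro!: sum.cong)

lemma fitch_dist_permutes:
  assumes "\<pi> permutes {..<r}" "2 \<le> r"
  shows "fitch_dist r T (\<pi> a) = map_pmf ((`) \<pi>) (fitch_dist r T a)"
  unfolding fitch_dist_def leaf_char_permutes[OF assms] map_pmf_comp
  using permutes_inj[OF assms(1)] by (auto simp: fitch_map length_leaf_char intro!: map_pmf_cong)

lemma pmf_fitch_dist_transpose: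
  assumes "2 \<le> r" "\<alpha> < r" "\<beta> < r" "\<alpha> \<in> A \<longleftrightarrow> \<beta> \<in> A"
  shows "pmf (fitch_dist r T \<beta>) A = pmf (fitch_dist r T \<alpha>) A"
proof -
  let ?\<tau> = "Transposition.transpose \<alpha> \<beta>"
  have "?\<tau> permutes {..<r}"
    using assms(2,3) by (simp add: permutes_swap_id)
  then have "fitch_dist r T \<beta> = map_pmf ((`) ?\<tau>) (fitch_dist r T \<alpha>)"
    using fitch_dist_permutes[OF _ assms(1), of ?\<tau> T \<alpha>] by simp
  moreover have "inj ((`) ?\<tau>)"
    by (rule injI) (simp add: inj_image_eq_iff[OF inj_transpose])
  ultimately have "pmf (fitch_dist r T \<beta>) (?\<tau> ` A) = pmf (fitch_dist r T \<alpha>) A"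
    by (simp add: pmf_map_inj')
  then show ?thesis
    using assms(4) by simp
qed

lemma pmf_edge_fitch_dist:
  assumes "2 \<le> r" "a < r"
  shows "pmf (edge_fitch_dist r p T a) A = (\<Sum>c<r. pmf (nr_step r p a) c * pmf (fitch_dist r T c) A)"
  unfolding edge_fitch_dist_def pmf_bind using set_pmf_nr_step[OF assms]
  by (subst integral_measure_pmf_real[of "{..<r}"]) (auto simp: mult.commute)

lemma edge_fitch_dist_diff:
  assumes "2 \<le> r" "\<alpha> < r" "\<beta> < r" "0 \<le> p" "p \<le> 1"
  shows "pmf (edge_fitch_dist r p T \<alpha>) A - pmf (edge_fitch_dist r p T \<beta>) A
    = (1 - p * real r / (real r - 1)) * (pmf (fitch_dist r T \<alpha>) A - pmf (fitch_dist r T \<beta>) A)"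
  unfolding pmf_edge_fitch_dist[OF assms(1,2)] pmf_edge_fitch_dist[OF assms(1,3)]
  by (rule sum_nr_step_diff[OF assms])

lemma Neyman_contraction_nonneg:
  "2 \<le> r \<Longrightarrow> p \<le> (real r - 1) / real r \<Longrightarrow> 0 \<le> 1 - p * real r / (real r - 1)"
  by (simp add: field_simps)

lemma Neyman_contraction_pos:
  "2 \<le> r \<Longrightarrow> p < (real r - 1) / real r \<Longrightarrow> 0 < 1 - p * real r / (real r - 1)"
  by (simp add: field_simps)

lemma Neyman_probability_le_1: "p \<le> (real r - 1) / real r \<Longrightarrow> p \<le> 1"
  by (erule order_trans) (auto simp: divide_le_eq_1)

definition favours :: "'a \<Rightarrow> 'a \<Rightarrow> 'a set pmf \<Rightarrow> 'a set pmf \<Rightarrow> bool" where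
  "favours \<alpha> \<beta> \<mu> \<nu> \<longleftrightarrow> (\<forall>A. (\<beta> \<in> A \<longrightarrow> \<alpha> \<in> A) \<longrightarrow> pmf \<nu> A \<le> pmf \<mu> A)"

lemma favours_edge_fitch_dist:
  assumes "2 \<le> r" "\<alpha> < r" "\<beta> < r" "0 \<le> p" "p \<le> (real r - 1) / real r"
    and "favours \<alpha> \<beta> (fitch_dist r T \<alpha>) (fitch_dist r T \<beta>)"
  shows "favours \<alpha> \<beta> (edge_fitch_dist r p T \<alpha>) (edge_fitch_dist r p T \<beta>)"
  unfolding favours_def
proof (intro allI impI)
  fix A assume "\<beta> \<in> A \<longrightarrow> \<alpha> \<in> A"
  then have "0 \<le> pmf (fitch_dist r T \<alpha>) A - pmf (fitch_dist r T \<beta>) A"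
    using assms(6) by (simp add: favours_def)
  then have "0 \<le> pmf (edge_fitch_dist r p T \<alpha>) A - pmf (edge_fitch_dist r p T \<beta>) A"
    using Neyman_contraction_nonneg[OF assms(1,5)] Neyman_probability_le_1[OF assms(5)]
    by (simp add: edge_fitch_dist_diff[OF assms(1-4)])
  then show "pmf (edge_fitch_dist r p T \<beta>) A \<le> pmf (edge_fitch_dist r p T \<alpha>) A"
    by simp
qed

lemma edge_fitch_dist_less:
  assumes "2 \<le> r" "\<alpha> < r" "\<beta> < r" "0 \<le> p" "p < (real r - 1) / real r"
    and "pmf (fitch_dist r T \<beta>) A < pmf (fitch_dist r T \<alpha>) A"
  shows "pmf (edge_fitch_dist r p T \<beta>) A < pmf (edge_fitch_dist r p T \<alpha>) A"
proof -
  have "p \<le> 1"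
    using Neyman_probability_le_1[of p r] assms(5) by simp
  then have "0 < pmf (edge_fitch_dist r p T \<alpha>) A - pmf (edge_fitch_dist r p T \<beta>) A"
    using Neyman_contraction_pos[OF assms(1,5)] assms(6)
    by (simp add: edge_fitch_dist_diff[OF assms(1-4)])
  then show ?thesis
    by simp
qed

lemma fitch_join_separates:
  assumes "\<alpha> \<in> fitch_join A B" "\<beta> \<notin> fitch_join A B"
  shows "\<beta> \<in> A \<longrightarrow> \<alpha> \<in> A" "\<beta> \<in> B \<longrightarrow> \<alpha> \<in> B"
  using assms by (auto simp: fitch_join_def split: if_splits)

lemma fitch_join_term_le:
  assumes "favours \<alpha> \<beta> \<mu>\<^sub>1 \<nu>\<^sub>1" "favours \<alpha> \<beta> \<mu>\<^sub>2 \<nu>\<^sub>2" "\<alpha> \<in> S" "\<beta> \<notin> S"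
  shows "of_bool (fitch_join A B = S) * (pmf \<nu>\<^sub>1 A * pmf \<nu>\<^sub>2 B)
    \<le> of_bool (fitch_join A B = S) * (pmf \<mu>\<^sub>1 A * pmf \<mu>\<^sub>2 B)"
proof (cases "fitch_join A B = S")
  case True
  then have "pmf \<nu>\<^sub>1 A \<le> pmf \<mu>\<^sub>1 A" "pmf \<nu>\<^sub>2 B \<le> pmf \<mu>\<^sub>2 B"
    using fitch_join_separates[of \<alpha> A B \<beta>] assms by (auto simp: favours_def)
  then show ?thesis
    by (simp add: mult_mono)
qed simp

lemma favours_fitch_join_pmf:
  assumes "finite U" "set_pmf \<mu>\<^sub>1 \<subseteq> U" "set_pmf \<mu>\<^sub>2 \<subseteq> U" "set_pmf \<nu>\<^sub>1 \<subseteq> U" "set_pmf \<nu>\<^sub>2 \<subseteq> U"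
    and "favours \<alpha> \<beta> \<mu>\<^sub>1 \<nu>\<^sub>1" "favours \<alpha> \<beta> \<mu>\<^sub>2 \<nu>\<^sub>2" "\<alpha> \<in> S" "\<beta> \<notin> S"
  shows "pmf (fitch_join_pmf \<nu>\<^sub>1 \<nu>\<^sub>2) S \<le> pmf (fitch_join_pmf \<mu>\<^sub>1 \<mu>\<^sub>2) S"
  by (simp only: pmf_fitch_join_pmf[OF assms(1,4,5)] pmf_fitch_join_pmf[OF assms(1,2,3)])
     (intro sum_mono, clarify, rule fitch_join_term_le[OF assms(6-9)])

lemma fitch_join_pmf_singleton_less:
  assumes "finite U" "set_pmf \<mu>\<^sub>1 \<subseteq> U" "set_pmf \<mu>\<^sub>2 \<subseteq> U" "set_pmf \<nu>\<^sub>1 \<subseteq> U" "set_pmf \<nu>\<^sub>2 \<subseteq> U"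
    and "favours \<alpha> \<beta> \<mu>\<^sub>1 \<nu>\<^sub>1" "favours \<alpha> \<beta> \<mu>\<^sub>2 \<nu>\<^sub>2" "\<alpha> \<noteq> \<beta>" "{\<alpha>} \<in> U"
    and "pmf \<nu>\<^sub>1 {\<alpha>} < pmf \<mu>\<^sub>1 {\<alpha>}" "pmf \<nu>\<^sub>2 {\<alpha>} < pmf \<mu>\<^sub>2 {\<alpha>}"
  shows "pmf (fitch_join_pmf \<nu>\<^sub>1 \<nu>\<^sub>2) {\<alpha>} < pmf (fitch_join_pmf \<mu>\<^sub>1 \<mu>\<^sub>2) {\<alpha>}"
proof -
  have "pmf \<nu>\<^sub>1 {\<alpha>} * pmf \<nu>\<^sub>2 {\<alpha>} < pmf \<mu>\<^sub>1 {\<alpha>} * pmf \<mu>\<^sub>2 {\<alpha>}"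
    using assms(10,11) by (intro mult_strict_mono) (auto intro: le_less_trans[OF pmf_nonneg])
  then have "\<exists>(A, B)\<in>U \<times> U. of_bool (fitch_join A B = {\<alpha>}) * (pmf \<nu>\<^sub>1 A * pmf \<nu>\<^sub>2 B)
      < of_bool (fitch_join A B = {\<alpha>}) * (pmf \<mu>\<^sub>1 A * pmf \<mu>\<^sub>2 B)"
    using assms(9) by (intro bexI[of _ "({\<alpha>}, {\<alpha>})"]) (auto simp: fitch_join_def)
  moreover have "\<forall>(A, B)\<in>U \<times> U. of_bool (fitch_join A B = {\<alpha>}) * (pmf \<nu>\<^sub>1 A * pmf \<nu>\<^sub>2 B)
      \<le> of_bool (fitch_join A B = {\<alpha>}) * (pmf \<mu>\<^sub>1 A * pmf \<mu>\<^sub>2 B)"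
    using fitch_join_term_le[OF assms(6,7), where S = "{\<alpha>}"] assms(8) by auto
  ultimately show ?thesis
    unfolding pmf_fitch_join_pmf[OF assms(1,4,5)] pmf_fitch_join_pmf[OF assms(1,2,3)]
    using assms(1) by (intro sum_strict_mono_ex1) auto
qed

lemma favours_fitch_dist:
  assumes "2 \<le> r" "\<alpha> < r" "\<beta> < r" "\<alpha> \<noteq> \<beta>"
    and "\<forall>p\<in>edge_probs T. 0 \<le> p \<and> p \<le> (real r - 1) / real r"
  shows "favours \<alpha> \<beta> (fitch_dist r T \<alpha>) (fitch_dist r T \<beta>)"
  using assms(5)
proof (induction T)
  case Leaf
  then show ?case
    using assms(4) by (auto simp: favours_def fitch_dist_Leaf indicator_def)
next
  case (Node p l q rt)
  have edges: "favours \<alpha> \<beta> (edge_fitch_dist r p l \<alpha>) (edge_fitch_dist r p l \<beta>)"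
    "favours \<alpha> \<beta> (edge_fitch_dist r q rt \<alpha>) (edge_fitch_dist r q rt \<beta>)"
    using Node favours_edge_fitch_dist[OF assms(1-3)] by auto
  show ?case
    unfolding favours_def
  proof (intro allI impI)
    fix S assume "\<beta> \<in> S \<longrightarrow> \<alpha> \<in> S"
    then consider "\<alpha> \<in> S" "\<beta> \<notin> S" | "\<alpha> \<in> S \<longleftrightarrow> \<beta> \<in> S"
      by blast
    then show "pmf (fitch_dist r (Node p l q rt) \<beta>) S \<le> pmf (fitch_dist r (Node p l q rt) \<alpha>) S"
    proof cases
      case 1
      show ?thesis
        unfolding fitch_dist_Node
        by (rule favours_fitch_join_pmf[where U = "Pow {..<r} - {{}}"])
           (use edges 1 assms set_edge_fitch_dist in auto)
    next
      case 2
      then show ?thesis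
        using pmf_fitch_dist_transpose[OF assms(1-3)] by simp
    qed
  qed
qed

lemma fitch_dist_singleton_less:
  assumes "2 \<le> r" "\<alpha> < r" "\<beta> < r" "\<alpha> \<noteq> \<beta>"
    and "\<forall>p\<in>edge_probs T. 0 \<le> p \<and> p < (real r - 1) / real r"
  shows "pmf (fitch_dist r T \<beta>) {\<alpha>} < pmf (fitch_dist r T \<alpha>) {\<alpha>}"
  using assms(5)
proof (induction T)
  case Leaf
  then show ?case
    using assms(4) by (simp add: fitch_dist_Leaf)
next
  case (Node p l q rt)
  have "favours \<alpha> \<beta> (fitch_dist r t \<alpha>) (fitch_dist r t \<beta>)"
    if "\<forall>p\<in>edge_probs t. 0 \<le> p \<and> p < (real r - 1) / real r" for t
    using that by (intro favours_fitch_dist[OF assms(1-4)]) auto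
  then have edges: "favours \<alpha> \<beta> (edge_fitch_dist r p l \<alpha>) (edge_fitch_dist r p l \<beta>)"
    "favours \<alpha> \<beta> (edge_fitch_dist r q rt \<alpha>) (edge_fitch_dist r q rt \<beta>)"
    using Node.prems by (auto intro!: favours_edge_fitch_dist[OF assms(1-3)])
  have "pmf (edge_fitch_dist r p l \<beta>) {\<alpha>} < pmf (edge_fitch_dist r p l \<alpha>) {\<alpha>}"
    "pmf (edge_fitch_dist r q rt \<beta>) {\<alpha>} < pmf (edge_fitch_dist r q rt \<alpha>) {\<alpha>}"
    using Node by (auto intro!: edge_fitch_dist_less[OF assms(1-3)])
  with edges show ?case
    unfolding fitch_dist_Node
    by (intro fitch_join_pmf_singleton_less[where U = "Pow {..<r} - {{}}"])
       (use assms set_edge_fitch_dist in auto)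
qed

definition mp_dist :: "nat \<Rightarrow> ptree \<Rightarrow> nat \<Rightarrow> nat pmf" where
  "mp_dist r T a = bind_pmf (fitch_dist r T a) pmf_of_set"

lemma RA_MP_eq_pmf_mp_dist: "RA_MP r T \<alpha> = pmf (mp_dist r T \<alpha>) \<alpha>"
  by (simp add: RA_MP_def mp_dist_def fitch_dist_def bind_map_pmf)

lemma mp_dist_permutes:
  assumes "\<pi> permutes {..<r}" "2 \<le> r"
  shows "mp_dist r T (\<pi> a) = map_pmf \<pi> (mp_dist r T a)"
  unfolding mp_dist_def fitch_dist_permutes[OF assms] bind_map_pmf map_bind_pmf
proof (rule bind_pmf_cong[OF refl])
  fix S assume "S \<in> set_pmf (fitch_dist r T a)"
  then show "pmf_of_set (\<pi> ` S) = map_pmf \<pi> (pmf_of_set S)"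
    using finite_nonempty_set_fitch_dist permutes_inj[OF assms(1)]
    by (simp add: map_pmf_of_set_inj inj_on_subset)
qed

lemma pmf_mp_dist_transpose:
  assumes "2 \<le> r" "\<alpha> < r" "\<beta> < r"
  shows "pmf (mp_dist r T \<beta>) \<alpha> = pmf (mp_dist r T \<alpha>) \<beta>"
proof -
  let ?\<tau> = "Transposition.transpose \<alpha> \<beta>"
  have "?\<tau> permutes {..<r}"
    using assms(2,3) by (simp add: permutes_swap_id)
  then have "mp_dist r T \<beta> = map_pmf ?\<tau> (mp_dist r T \<alpha>)"
    using mp_dist_permutes[OF _ assms(1), of ?\<tau> T \<alpha>] by simp
  then show ?thesis
    using pmf_map_inj'[OF inj_transpose, of \<alpha> \<beta> "mp_dist r T \<alpha>" \<beta>] by simp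
qed

lemma set_mp_dist:
  assumes "2 \<le> r" "a < r"
  shows "set_pmf (mp_dist r T a) \<subseteq> {..<r}"
proof
  fix x assume "x \<in> set_pmf (mp_dist r T a)"
  then obtain S where S: "S \<in> set_pmf (fitch_dist r T a)" and "x \<in> set_pmf (pmf_of_set S)"
    by (auto simp: mp_dist_def)
  then have "x \<in> S"
    using finite_nonempty_set_fitch_dist[OF S] by simp
  then show "x \<in> {..<r}"
    using set_fitch_dist[OF assms] S by blast
qed

lemma favours_weighted_pmf_le:
  fixes f :: "'a set \<Rightarrow> real"
  assumes "favours \<alpha> \<beta> \<mu> \<nu>" "0 \<le> f S" "\<alpha> \<notin> S \<Longrightarrow> f S = 0"
  shows "f S * pmf \<nu> S \<le> f S * pmf \<mu> S"
proof (cases "\<alpha> \<in> S")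
  case True
  then show ?thesis
    using assms(1,2) by (simp add: favours_def mult_left_mono)
qed (simp add: assms(3))

lemma favours_expectation_le:
  fixes f :: "'a set \<Rightarrow> real"
  assumes "favours \<alpha> \<beta> \<mu> \<nu>" "finite U" "set_pmf \<mu> \<subseteq> U" "set_pmf \<nu> \<subseteq> U"
    and "\<And>S. S \<in> U \<Longrightarrow> 0 \<le> f S" "\<And>S. S \<in> U \<Longrightarrow> \<alpha> \<notin> S \<Longrightarrow> f S = 0"
  shows "measure_pmf.expectation \<nu> f \<le> measure_pmf.expectation \<mu> f"
  using assms favours_weighted_pmf_le[OF assms(1)]
  by (simp add: integral_measure_pmf_real[of U] subsetD sum_mono)

lemma favours_expectation_less:
  fixes f :: "'a set \<Rightarrow> real"
  assumes "favours \<alpha> \<beta> \<mu> \<nu>" "finite U" "set_pmf \<mu> \<subseteq> U" "set_pmf \<nu> \<subseteq> U"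
    and "\<And>S. S \<in> U \<Longrightarrow> 0 \<le> f S" "\<And>S. S \<in> U \<Longrightarrow> \<alpha> \<notin> S \<Longrightarrow> f S = 0"
    and "{\<alpha>} \<in> U" "0 < f {\<alpha>}" "pmf \<nu> {\<alpha>} < pmf \<mu> {\<alpha>}"
  shows "measure_pmf.expectation \<nu> f < measure_pmf.expectation \<mu> f"
proof -
  have "f {\<alpha>} * pmf \<nu> {\<alpha>} < f {\<alpha>} * pmf \<mu> {\<alpha>}"
    using assms(8,9) by simp
  then have "(\<Sum>S\<in>U. f S * pmf \<nu> S) < (\<Sum>S\<in>U. f S * pmf \<mu> S)"
    using assms(2,5-7) favours_weighted_pmf_le[OF assms(1)] by (intro sum_strict_mono_ex1) auto
  then show ?thesis
    using assms(2-4) by (simp add: integral_measure_pmf_real[of U] subsetD)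
qed

lemma pmf_mp_dist_as_expectation:
  "pmf (mp_dist r T a) x = measure_pmf.expectation (fitch_dist r T a) (\<lambda>S. pmf (pmf_of_set S) x)"
  by (simp add: mp_dist_def pmf_bind)

text \<open>The empty set is kept out of the universe of Fitch sets because \<open>pmf_of_set {}\<close> is
  unspecified.\<close>

lemma pmf_of_set_nonempty_subset_eq_0:
  fixes r :: nat
  assumes "S \<in> Pow {..<r} - {{}}" "\<alpha> \<notin> S"
  shows "pmf (pmf_of_set S) \<alpha> = 0"
  using assms finite_subset[of S "{..<r}"] by auto

lemma pmf_mp_dist_other_root_le:
  assumes "2 \<le> r" "\<alpha> < r" "\<beta> < r" "\<alpha> \<noteq> \<beta>"
    and "\<forall>p\<in>edge_probs T. 0 \<le> p \<and> p \<le> (real r - 1) / real r"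
  shows "pmf (mp_dist r T \<beta>) \<alpha> \<le> pmf (mp_dist r T \<alpha>) \<alpha>"
  unfolding pmf_mp_dist_as_expectation
  by (rule favours_expectation_le[OF favours_fitch_dist[OF assms] _
        set_fitch_dist set_fitch_dist])
     (use assms pmf_of_set_nonempty_subset_eq_0 in auto)

lemma pmf_mp_dist_other_root_less:
  assumes "2 \<le> r" "\<alpha> < r" "\<beta> < r" "\<alpha> \<noteq> \<beta>"
    and "\<forall>p\<in>edge_probs T. 0 \<le> p \<and> p < (real r - 1) / real r"
  shows "pmf (mp_dist r T \<beta>) \<alpha> < pmf (mp_dist r T \<alpha>) \<alpha>"
proof -
  have "favours \<alpha> \<beta> (fitch_dist r T \<alpha>) (fitch_dist r T \<beta>)"
    using assms by (intro favours_fitch_dist) auto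
  then show ?thesis
    unfolding pmf_mp_dist_as_expectation
    by (rule favours_expectation_less[OF _ _
          set_fitch_dist set_fitch_dist _ _ _ _
          fitch_dist_singleton_less[OF assms]])
       (use assms pmf_of_set_nonempty_subset_eq_0 in auto)
qed

lemma pmf_mp_dist_le_root_state:
  assumes "2 \<le> r" "\<alpha> < r" "x < r"
    and "\<forall>p\<in>edge_probs T. 0 \<le> p \<and> p \<le> (real r - 1) / real r"
  shows "pmf (mp_dist r T \<alpha>) x \<le> pmf (mp_dist r T \<alpha>) \<alpha>"
  using pmf_mp_dist_other_root_le[OF assms(1,2,3) _ assms(4)] pmf_mp_dist_transpose[OF assms(1-3)]
  by (cases "x = \<alpha>") auto

lemma pmf_mp_dist_less_root_state:
  assumes "2 \<le> r" "\<alpha> < r" "x < r" "x \<noteq> \<alpha>"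
    and "\<forall>p\<in>edge_probs T. 0 \<le> p \<and> p < (real r - 1) / real r"
  shows "pmf (mp_dist r T \<alpha>) x < pmf (mp_dist r T \<alpha>) \<alpha>"
  using pmf_mp_dist_other_root_less[OF assms(1,2,3) assms(4)[symmetric] assms(5)]
    pmf_mp_dist_transpose[OF assms(1-3)] by simp

lemma inverse_card_le_if_sum_eq_1:
  fixes f :: "'a \<Rightarrow> real"
  assumes "finite A" "sum f A = 1" "\<And>x. x \<in> A \<Longrightarrow> f x \<le> f a"
  shows "1 / real (card A) \<le> f a"
proof -
  have "A \<noteq> {}"
    using assms(2) by auto
  moreover have "1 \<le> real (card A) * f a"
    using sum_mono[of A f "\<lambda>_. f a"] assms by simp
  ultimately show ?thesis
    using assms(1) by (simp add: divide_le_eq mult.commute)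
qed

lemma inverse_card_less_if_sum_eq_1:
  fixes f :: "'a \<Rightarrow> real"
  assumes "finite A" "sum f A = 1" "\<And>x. x \<in> A \<Longrightarrow> f x \<le> f a" "x \<in> A" "f x < f a"
  shows "1 / real (card A) < f a"
proof -
  have "1 < real (card A) * f a"
    using sum_strict_mono_ex1[of A f "\<lambda>_. f a"] assms by auto
  moreover have "card A > 0"
    using assms(1,4) card_gt_0_iff by blast
  ultimately show ?thesis
    by (simp add: divide_less_eq mult.commute)
qed

theorem corollary3:
  fixes T :: ptree and r :: nat and \<alpha> :: nat
  assumes "r \<ge> 2" and "T \<noteq> Leaf" and "\<alpha> < r"
    and "\<forall>p \<in> edge_probs T. 0 \<le> p \<and> p \<le> (real r - 1) / real r"
  shows "RA_MP r T \<alpha> \<ge> 1 / real r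
    \<and> ((\<forall>p \<in> edge_probs T. p < (real r - 1) / real r) \<longrightarrow> RA_MP r T \<alpha> > 1 / real r)"
proof -
  let ?P = "\<lambda>x. pmf (mp_dist r T \<alpha>) x"
  have sum: "sum ?P {..<r} = 1"
    using set_mp_dist[OF assms(1,3)] by (intro sum_pmf_eq_1) auto
  have le: "?P x \<le> ?P \<alpha>" if "x < r" for x
    using pmf_mp_dist_le_root_state[OF assms(1,3) that assms(4)] .
  have "1 / real r \<le> RA_MP r T \<alpha>"
    using inverse_card_le_if_sum_eq_1[OF _ sum le] by (simp add: RA_MP_eq_pmf_mp_dist)
  moreover have "1 / real r < RA_MP r T \<alpha>"
    if "\<forall>p \<in> edge_probs T. p < (real r - 1) / real r"
  proof -
    define x where "x = (if \<alpha> = 0 then 1 else 0 :: nat)"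
    have "x < r" "x \<noteq> \<alpha>"
      using assms(1) by (auto simp: x_def)
    moreover have "?P x < ?P \<alpha>"
      using calculation assms(4) that by (intro pmf_mp_dist_less_root_state[OF assms(1,3)]) auto
    ultimately show ?thesis
      using inverse_card_less_if_sum_eq_1[OF _ sum le] by (simp add: RA_MP_eq_pmf_mp_dist)
  qed
  ultimately show ?thesis
    by blast
qed

end
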